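(* If $\mathcal C_j\cap\mathcal D=\emptyset$, then $c'_j=0$ and, as $x\to\infty$, $$1-F_j(x)=c_jx^{-1/\alpha_0}+\Big(d_j-\frac{c_j^2}{2}\Big)x^{-2/\alpha_0}+o\big(x^{-2/\alpha_0}\big).$$
   Context: Standing model. Fix $\alpha\in(0,1)$, $\alpha_0>0$, $\tau>0$, an integer $K\ge1$ and tilting parameters $\theta_1,\dots,\theta_K\ge0$. Let $\mathcal D=\{k:\theta_k=0\}$ and $\bar{\mathcal D}=\{1,\dots,K\}\setminus\mathcal D$. Fix locations $\boldsymbol s_1,\dots,\boldsymbol s_{n_s}$ and nonnegative weights $\omega_{kj}$; let $\mathcal C_j=\{k:\omega_{kj}\neq0\}$ and assume $\mathcal C_j\neq\emptyset$ for every $j$. Let $Z_1,\dots,Z_K$ be independent positive random variables with $E[e^{-sZ_k}]=\exp[-\{(\theta_k+s)^\alpha-\theta_k^\alpha\}]$, $s\ge0$. Let $\epsilon_1,\dots,\epsilon_{n_s}$ be i.i.d., independent of the $Z_k$, with $\Pr(\epsilon_j\le x)=\exp\{-(x/\tau)^{-1/\alpha_0}\}$, $x>0$. Define $X_j=\epsilon_j\big(\sum_{k=1}^K\omega_{kj}^{1/\alpha}Z_k\big)^{\alpha_0}$ and $F_j$ its distribution function. Constants: $c_j=\alpha\tau^{1/\alpha_0}\sum_{k\in\bar{\mathcal D}}\theta_k^{\alpha-1}\omega_{kj}^{1/\alpha}$, $c'_j=\tau^{\alpha/\alpha_0}\sum_{k\in\mathcal D}\omega_{kj}$, $d_j=\frac{\alpha(\alpha-1)}{2}\tau^{2/\alpha_0}\sum_{k\in\bar{\mathcal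 D}}\theta_k^{\alpha-2}\omega_{kj}^{2/\alpha}$. *)

theory Defs
  imports "HOL-Probability.Probability" "HOL-Library.Landau_Symbols"
begin

text \<open>Index sets. Latent components are indexed by k in {1..K}, locations by j in {1..ns}.\<close>

definition Dset :: "nat \<Rightarrow> (nat \<Rightarrow> real) \<Rightarrow> nat set" where
  "Dset K \<theta> = {k \<in> {1..K}. \<theta> k = 0}"

definition Dbar :: "nat \<Rightarrow> (nat \<Rightarrow> real) \<Rightarrow> nat set" where
  "Dbar K \<theta> = {1..K} - Dset K \<theta>"

definition Cset :: "nat \<Rightarrow> (nat \<Rightarrow> nat \<Rightarrow> real) \<Rightarrow> nat \<Rightarrow> nat set" where
  "Cset K w j = {k \<in> {1..K}. w k j \<noteq> 0}"

definition cconst :: "real \<Rightarrow> real \<Rightarrow> real \<Rightarrow> nat \<Rightarrow> (nat \<Rightarrow> real) \<Rightarrow> (nat \<Rightarrow> nat \<Rightarrow> real) \<Rightarrow> nat \<Rightarrow> real" where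
  "cconst \<alpha> \<alpha>0 \<tau> K \<theta> w j =
     \<alpha> * \<tau> powr (1 / \<alpha>0) * (\<Sum>k\<in>Dbar K \<theta>. \<theta> k powr (\<alpha> - 1) * w k j powr (1 / \<alpha>))"

definition cconst' :: "real \<Rightarrow> real \<Rightarrow> real \<Rightarrow> nat \<Rightarrow> (nat \<Rightarrow> real) \<Rightarrow> (nat \<Rightarrow> nat \<Rightarrow> real) \<Rightarrow> nat \<Rightarrow> real" where
  "cconst' \<alpha> \<alpha>0 \<tau> K \<theta> w j = \<tau> powr (\<alpha> / \<alpha>0) * (\<Sum>k\<in>Dset K \<theta>. w k j)"

definition dconst :: "real \<Rightarrow> real \<Rightarrow> real \<Rightarrow> nat \<Rightarrow> (nat \<Rightarrow> real) \<Rightarrow> (nat \<Rightarrow> nat \<Rightarrow> real) \<Rightarrow> nat \<Rightarrow> real" where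
  "dconst \<alpha> \<alpha>0 \<tau> K \<theta> w j =
     \<alpha> * (\<alpha> - 1) / 2 * \<tau> powr (2 / \<alpha>0) *
       (\<Sum>k\<in>Dbar K \<theta>. \<theta> k powr (\<alpha> - 2) * w k j powr (2 / \<alpha>))"

definition Xproc :: "real \<Rightarrow> real \<Rightarrow> nat \<Rightarrow> (nat \<Rightarrow> nat \<Rightarrow> real) \<Rightarrow> (nat \<Rightarrow> 'a \<Rightarrow> real)
    \<Rightarrow> (nat \<Rightarrow> 'a \<Rightarrow> real) \<Rightarrow> nat \<Rightarrow> 'a \<Rightarrow> real" where
  "Xproc \<alpha> \<alpha>0 K w Z eps j \<omega> =
     eps j \<omega> * (\<Sum>k=1..K. w k j powr (1 / \<alpha>) * Z k \<omega>) powr \<alpha>0"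

definition Fdist :: "'a measure \<Rightarrow> ('a \<Rightarrow> real) \<Rightarrow> real \<Rightarrow> real" where
  "Fdist M X x = measure M {\<omega> \<in> space M. X \<omega> \<le> x}"

end

theory Submission
  imports Defs "HOL-Real_Asymp.Real_Asymp"
begin

text \<open>Conditionally on \<open>S = \<Sum>\<^sub>k w\<^sub>k\<^sub>j powr (1/\<alpha>) * Z\<^sub>k\<close>, the Frechet law
  of \<open>\<epsilon>\<^sub>j\<close> gives \<open>P(X\<^sub>j \<le> x | S) = exp (- t S)\<close> with \<open>t = (x/\<tau>) powr (-1/\<alpha>\<^sub>0)\<close>,
  so \<open>F\<^sub>j(x)\<close> is the Laplace transform of \<open>S\<close> at \<open>t\<close>; by independence it equals
  \<open>exp (- P t)\<close> with \<open>P t = \<Sum>\<^sub>k ((\<theta>\<^sub>k + t w\<^sub>k\<^sub>j powr (1/\<alpha>)) powr \<alpha> - \<theta>\<^sub>k powr \<alpha>)\<close>.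
  If no component with \<open>\<theta>\<^sub>k = 0\<close> charges location \<open>j\<close>, only components with \<open>\<theta>\<^sub>k > 0\<close>
  contribute and \<open>P\<close> is smooth at \<open>0\<close>. Composing \<open>P t = C t + D t\<^sup>2 + o(t\<^sup>2)\<close> with
  \<open>1 - exp (- y) = y - y\<^sup>2/2 + o(y\<^sup>2)\<close> gives \<open>1 - F\<^sub>j = C t + (D - C\<^sup>2/2) t\<^sup>2 + o(t\<^sup>2)\<close>,
  which is the claim after substituting \<open>t\<close>.\<close>

lemma power2_powr: "(x powr r)\<^sup>2 = x powr (2 * r)" for x r :: real
  by (simp add: power2_eq_square powr_add[symmetric])

lemma one_plus_powr_second_order:
  fixes al :: real
  shows "((\<lambda>u. ((1 + u) powr al - 1 - al*u - al*(al-1)/2*u^2) / u^2) \<longlongrightarrow> 0) (at 0)"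
  by real_asymp

lemma powr_second_order_expansion:
  fixes th a al :: real
  assumes th: "th > 0"
  shows "((\<lambda>t. ((th + t*a) powr al - th powr al - al * th powr (al-1) * a * t
            - al*(al-1)/2 * th powr (al-2) * a^2 * t^2) / t^2) \<longlongrightarrow> 0) (at 0)"
proof (cases "a = 0")
  case False
  define u where "u t = t * a / th" for t
  have u0: "(u \<longlongrightarrow> 0) (at 0)"
    unfolding u_def using th by (auto intro!: tendsto_eq_intros)
  have "filterlim u (at 0) (at 0)"
  proof (rule filterlim_atI[OF u0])
    show "\<forall>\<^sub>F t in at 0. u t \<noteq> 0"
      using False th by (auto simp: u_def eventually_at_filter)
  qed
  then have "((\<lambda>t. th powr al * a^2 / th^2 *
      (((1 + u t) powr al - 1 - al * u t - al*(al-1)/2 * (u t)^2) / (u t)^2)) \<longlongrightarrow> 0) (at 0)"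
    by (intro tendsto_mult_right_zero filterlim_compose[OF one_plus_powr_second_order])
  moreover have "\<forall>\<^sub>F t in at 0. t \<noteq> 0 \<and> u t > -1"
    using order_tendstoD(1)[OF u0, of "-1"] by (auto simp: eventually_at_filter elim: eventually_mono)
  then have "\<forall>\<^sub>F t in at 0. th powr al * a^2 / th^2 *
      (((1 + u t) powr al - 1 - al * u t - al*(al-1)/2 * (u t)^2) / (u t)^2)
      = ((th + t*a) powr al - th powr al - al * th powr (al-1) * a * t
          - al*(al-1)/2 * th powr (al-2) * a^2 * t^2) / t^2"
  proof (rule eventually_mono, safe)
    fix t :: real assume t: "t \<noteq> 0" "u t > -1"
    have "th + t*a = th * (1 + u t)" using th by (simp add: u_def field_simps)
    then have e0: "(th + t*a) powr al = th powr al * (1 + u t) powr al"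
      using th t by (simp add: powr_mult)
    have e1: "th powr (al-1) = th powr al / th" and e2: "th powr (al-2) = th powr al / th^2"
      using th by (simp_all add: powr_diff)
    show "th powr al * a^2 / th^2 *
      (((1 + u t) powr al - 1 - al * u t - al*(al-1)/2 * (u t)^2) / (u t)^2)
      = ((th + t*a) powr al - th powr al - al * th powr (al-1) * a * t
          - al*(al-1)/2 * th powr (al-2) * a^2 * t^2) / t^2"
      unfolding e0 e1 e2 using th t False by (simp add: u_def field_simps power2_eq_square)
  qed
  ultimately show ?thesis
    by (rule Lim_transform_eventually)
qed simp

lemma sum_powr_second_order_expansion:
  fixes th a :: "'i \<Rightarrow> real" and al :: real
  assumes "finite A" and "\<And>k. k \<in> A \<Longrightarrow> th k > 0"
  shows "((\<lambda>t. ((\<Sum>k\<in>A. (th k + t * a k) powr al - th k powr al)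
            - al * (\<Sum>k\<in>A. th k powr (al-1) * a k) * t
            - al*(al-1)/2 * (\<Sum>k\<in>A. th k powr (al-2) * (a k)^2) * t^2) / t^2) \<longlongrightarrow> 0) (at 0)"
proof -
  have "((\<lambda>t. \<Sum>k\<in>A. ((th k + t * a k) powr al - th k powr al - al * th k powr (al-1) * a k * t
            - al*(al-1)/2 * th k powr (al-2) * (a k)^2 * t^2) / t^2) \<longlongrightarrow> 0) (at 0)"
    using assms(2) by (intro tendsto_null_sum powr_second_order_expansion)
  then show ?thesis
    by (simp add: sum_divide_distrib[symmetric] sum_subtractf sum_distrib_left sum_distrib_right mult_ac)
qed

lemma one_minus_exp_neg_second_order:
  "((\<lambda>y::real. (1 - exp (- y) - y + y^2/2) / y^2) \<longlongrightarrow> 0) (at 0)"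
  by real_asymp

lemma one_minus_exp_neg_second_order_expansion:
  fixes P :: "real \<Rightarrow> real"
  assumes P: "((\<lambda>t. (P t - C*t - D*t^2) / t^2) \<longlongrightarrow> 0) (at 0 within S)" and "C \<noteq> 0"
  shows "((\<lambda>t. (1 - exp (- P t) - C*t - (D - C^2/2)*t^2) / t^2) \<longlongrightarrow> 0) (at 0 within S)"
proof -
  define r where "r t = (P t - C*t - D*t^2) / t^2" for t
  have ev: "\<forall>\<^sub>F t in at 0 within S. t \<noteq> 0"
    by (rule eventually_neq_at_within)
  have "((\<lambda>t. C + D*t + t * r t) \<longlongrightarrow> C + D*0 + 0 * 0) (at 0 within S)"
    unfolding r_def by (intro tendsto_intros P)
  then have "((\<lambda>t. C + D*t + t * r t) \<longlongrightarrow> C) (at 0 within S)"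
    by simp
  then have PC: "((\<lambda>t. P t / t) \<longlongrightarrow> C) (at 0 within S)"
    by (rule Lim_transform_eventually[OF _ eventually_mono[OF ev]]) (auto simp: r_def field_simps power2_eq_square)
  have "((\<lambda>t. t * (P t / t)) \<longlongrightarrow> 0 * C) (at 0 within S)"
    by (intro tendsto_intros PC)
  then have "((\<lambda>t. t * (P t / t)) \<longlongrightarrow> 0) (at 0 within S)"
    by simp
  then have P0: "(P \<longlongrightarrow> 0) (at 0 within S)"
    by (rule Lim_transform_eventually[OF _ eventually_mono[OF ev]]) auto
  have "\<forall>\<^sub>F t in at 0 within S. P t / t \<noteq> 0"
    using PC \<open>C \<noteq> 0\<close> by (rule tendsto_imp_eventually_ne)
  then have Pne: "\<forall>\<^sub>F t in at 0 within S. P t \<noteq> 0"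
    by eventually_elim auto
  then have "filterlim P (at 0) (at 0 within S)"
    by (intro filterlim_atI P0)
  then have G: "((\<lambda>t. (1 - exp (- P t) - P t + (P t)^2/2) / (P t)^2) \<longlongrightarrow> 0) (at 0 within S)"
    by (rule filterlim_compose[OF one_minus_exp_neg_second_order])
  have "((\<lambda>t. (1 - exp (- P t) - P t + (P t)^2/2) / (P t)^2 * (P t / t)^2 + r t
           - (D + r t) * (P t + C*t) / 2) \<longlongrightarrow> 0 * C^2 + 0 - (D + 0) * (0 + C*0) / 2) (at 0 within S)"
    unfolding r_def by (intro tendsto_intros G PC P0 P) simp
  then have "((\<lambda>t. (1 - exp (- P t) - P t + (P t)^2/2) / (P t)^2 * (P t / t)^2 + r t
           - (D + r t) * (P t + C*t) / 2) \<longlongrightarrow> 0) (at 0 within S)"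
    by simp
  moreover
  \<comment> \<open>rests on \<open>C\<^sup>2 t\<^sup>2 - P\<^sup>2 = -(P + C t)(D + r) t\<^sup>2\<close>\<close>
  have "\<forall>\<^sub>F t in at 0 within S. (1 - exp (- P t) - P t + (P t)^2/2) / (P t)^2 * (P t / t)^2 + r t
           - (D + r t) * (P t + C*t) / 2 = (1 - exp (- P t) - C*t - (D - C^2/2)*t^2) / t^2"
    using ev Pne by eventually_elim (simp add: r_def field_simps power2_eq_square)
  ultimately show ?thesis
    by (rule Lim_transform_eventually)
qed

lemma second_order_expansion_at_top_of_at_right:
  fixes f g :: "real \<Rightarrow> real" and a0 c d :: real
  assumes a0: "a0 > 0"
    and f: "((\<lambda>t. (f t - c*t - d*t^2) / t^2) \<longlongrightarrow> 0) (at_right 0)"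
    and g: "\<And>x. x > 0 \<Longrightarrow> g x = f (x powr (-1/a0))"
  shows "(\<lambda>x. g x - (c * x powr (-1/a0) + d * x powr (-2/a0))) \<in> o[at_top](\<lambda>x. x powr (-2/a0))"
proof (rule smalloI_tendsto)
  have "filterlim (\<lambda>x. x powr (-1/a0)) (at_right 0) at_top"
    using a0 by real_asymp
  then have "((\<lambda>x. (f (x powr (-1/a0)) - c * x powr (-1/a0) - d * (x powr (-1/a0))^2)
      / (x powr (-1/a0))^2) \<longlongrightarrow> 0) at_top"
    by (rule filterlim_compose[OF f])
  moreover have "\<forall>\<^sub>F x in at_top. (f (x powr (-1/a0)) - c * x powr (-1/a0) - d * (x powr (-1/a0))^2)
      / (x powr (-1/a0))^2 = (g x - (c * x powr (-1/a0) + d * x powr (-2/a0))) / x powr (-2/a0)"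
    using eventually_gt_at_top[of 0] by eventually_elim (simp add: g power2_powr)
  ultimately show "((\<lambda>x. (g x - (c * x powr (-1/a0) + d * x powr (-2/a0))) / x powr (-2/a0))
      \<longlongrightarrow> 0) at_top"
    by (rule Lim_transform_eventually)
  show "\<forall>\<^sub>F x in at_top. x powr (-2/a0) \<noteq> 0"
    using eventually_gt_at_top[of 0] by eventually_elim simp
qed

lemma (in prob_space) indep_vars_reindex:
  assumes h: "inj_on h I" and indep: "indep_vars M' X (h ` I)"
  shows "indep_vars (\<lambda>i. M' (h i)) (\<lambda>i. X (h i)) I"
proof -
  define F where "F i = sigma_sets (space M) {X i -` A \<inter> space M | A. A \<in> sets (M' i)}" for i
  have rv: "\<forall>i\<in>h ` I. random_variable (M' i) (X i)" and ind: "indep_sets F (h ` I)"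
    using indep unfolding indep_vars_def F_def by auto
  have "indep_sets (\<lambda>i. F (h i)) I"
  proof (rule indep_setsI)
    show "F (h i) \<subseteq> events" if "i \<in> I" for i
      using ind that unfolding indep_sets_def by auto
    fix A J assume J: "J \<noteq> {}" "J \<subseteq> I" "finite J" and A: "\<forall>j\<in>J. A j \<in> F (h j)"
    have hJ: "inj_on h J" using h J(2) by (rule inj_on_subset)
    define B where "B = A \<circ> the_inv_into J h"
    have B: "B (h j) = A j" if "j \<in> J" for j
      using hJ that by (simp add: B_def the_inv_into_f_f)
    have "prob (\<Inter>j\<in>h ` J. B j) = (\<Prod>j\<in>h ` J. prob (B j))"
      using J A B by (intro indep_setsD[OF ind]) auto
    then show "prob (\<Inter>j\<in>J. A j) = (\<Prod>j\<in>J. prob (A j))"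
      using hJ B by (simp add: prod.reindex)
  qed
  then show ?thesis
    using rv unfolding indep_vars_def F_def by auto
qed

lemma (in prob_space) integrable_exp_neg_mult:
  fixes X :: "'a \<Rightarrow> real"
  assumes "X \<in> borel_measurable M" "AE \<omega> in M. 0 \<le> X \<omega>" "0 \<le> s"
  shows "integrable M (\<lambda>\<omega>. exp (- s * X \<omega>))"
proof (rule integrable_const_bound[where B=1])
  show "AE \<omega> in M. norm (exp (- s * X \<omega>)) \<le> 1"
    using assms(2)
  proof eventually_elim
    fix \<omega> assume "0 \<le> X \<omega>"
    then have "0 \<le> s * X \<omega>" using \<open>0 \<le> s\<close> by simp
    then show "norm (exp (- s * X \<omega>)) \<le> 1" by simp
  qed
qed (use assms(1) in simp)

lemma (in prob_space) expectation_exp_neg_sum_indep: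
  fixes X :: "'i \<Rightarrow> 'a \<Rightarrow> real"
  assumes "finite I" and indep: "indep_vars (\<lambda>_. borel) X I"
    and "\<And>i. i \<in> I \<Longrightarrow> AE \<omega> in M. 0 \<le> X i \<omega>" and "\<And>i. i \<in> I \<Longrightarrow> 0 \<le> c i"
  shows "expectation (\<lambda>\<omega>. exp (- (\<Sum>i\<in>I. c i * X i \<omega>)))
       = (\<Prod>i\<in>I. expectation (\<lambda>\<omega>. exp (- c i * X i \<omega>)))"
proof -
  have "indep_vars (\<lambda>_. borel) (\<lambda>i \<omega>. exp (- c i * X i \<omega>)) I"
    by (rule indep_vars_compose2[OF indep]) auto
  moreover have "integrable M (\<lambda>\<omega>. exp (- c i * X i \<omega>))" if "i \<in> I" for i
    using indep that assms(3,4) by (intro integrable_exp_neg_mult) (auto simp: indep_vars_def)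
  ultimately have "expectation (\<lambda>\<omega>. \<Prod>i\<in>I. exp (- c i * X i \<omega>))
      = (\<Prod>i\<in>I. expectation (\<lambda>\<omega>. exp (- c i * X i \<omega>)))"
    using \<open>finite I\<close> by (intro indep_vars_lebesgue_integral)
  then show ?thesis
    using \<open>finite I\<close> by (simp add: exp_sum[symmetric] sum_negf)
qed

lemma (in prob_space) indep_var_sum_Inl_Inr:
  fixes X Y :: "'i \<Rightarrow> 'a \<Rightarrow> real"
  assumes indep: "indep_vars (\<lambda>_. borel) (case_sum X Y) (I <+> J)" and "finite I" "j \<in> J"
  shows "indep_var borel (\<lambda>\<omega>. \<Sum>i\<in>I. c i * X i \<omega>) borel (Y j)"
proof -
  have "indep_var
      borel ((\<lambda>f. \<Sum>i\<in>I. c i * f (Inl i)) \<circ> (\<lambda>\<omega>. restrict (\<lambda>i. case_sum X Y i \<omega>) (Inl ` I)))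
      borel ((\<lambda>f. f (Inr j)) \<circ> (\<lambda>\<omega>. restrict (\<lambda>i. case_sum X Y i \<omega>) {Inr j}))"
    using assms by (intro indep_var_compose[OF indep_var_restrict[OF indep]]) auto
  then show ?thesis
    by (simp add: comp_def cong: sum.cong)
qed

lemma (in prob_space) prob_mult_powr_le_Frechet:
  assumes indep: "indep_var borel S borel E" and S: "AE \<omega> in M. 0 < S \<omega>"
    and E: "\<And>y. y > 0 \<Longrightarrow> prob {\<omega> \<in> space M. E \<omega> \<le> y} = exp (- ((y / tau) powr (- 1 / a0)))"
    and tau: "0 < tau" and a0: "0 < a0" and x: "0 < x"
  shows "prob {\<omega> \<in> space M. E \<omega> * S \<omega> powr a0 \<le> x}
       = expectation (\<lambda>\<omega>. exp (- ((x / tau) powr (- 1 / a0)) * S \<omega>))"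
proof -
  define t where "t = (x / tau) powr (- 1 / a0)"
  define B where "B = {p :: real \<times> real. snd p * fst p powr a0 \<le> x}"
  have [measurable]: "S \<in> borel_measurable M" "E \<in> borel_measurable M"
    and distr_eq: "distr M borel S \<Otimes>\<^sub>M distr M borel E = distr M (borel \<Otimes>\<^sub>M borel) (\<lambda>\<omega>. (S \<omega>, E \<omega>))"
    using indep unfolding indep_var_distribution_eq by auto
  interpret PE: prob_space "distr M borel E" by (rule prob_space_distr) simp
  have B[measurable]: "B \<in> sets (borel \<Otimes>\<^sub>M borel)"
  proof -
    have "{p \<in> space (borel \<Otimes>\<^sub>M borel). snd p * fst p powr a0 \<le> x} \<in> sets (borel \<Otimes>\<^sub>M (borel :: real measure))"
      by measurable
    then show ?thesis by (simp add: B_def space_pair_measure)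
  qed
  \<comment> \<open>the Frechet law of \<open>E\<close> turns each section of \<open>B\<close> into the factor \<open>exp (- t s)\<close>\<close>
  have Pair_vimage: "emeasure (distr M borel E) (Pair s -` B) = ennreal (exp (- t * s))" if s: "s > 0" for s
  proof -
    have "Pair s -` B = {..x / s powr a0}"
      using s by (auto simp: B_def field_simps)
    moreover have "((x / s powr a0) / tau) powr (- 1 / a0) = t * s"
    proof -
      have "((x / s powr a0) / tau) powr (- 1 / a0) = t / (s powr a0) powr (- 1 / a0)"
        using s x tau by (simp add: t_def powr_divide powr_mult)
      also have "(s powr a0) powr (- 1 / a0) = 1 / s"
        using s a0 by (simp add: powr_powr powr_minus_divide)
      finally show ?thesis by simp
    qed
    ultimately show ?thesis
      using s x E[of "x / s powr a0"] by (simp add: emeasure_distr emeasure_eq_measure vimage_def Int_def conj_commute)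
  qed
  have "emeasure (distr M borel S \<Otimes>\<^sub>M distr M borel E) B
      = (\<integral>\<^sup>+s. emeasure (distr M borel E) (Pair s -` B) \<partial>distr M borel S)"
    by (rule PE.emeasure_pair_measure_alt) simp
  also have "\<dots> = (\<integral>\<^sup>+s. ennreal (exp (- t * s)) \<partial>distr M borel S)"
    using S by (intro nn_integral_cong_AE) (auto simp: AE_distr_iff Pair_vimage elim: eventually_mono)
  also have "\<dots> = (\<integral>\<^sup>+\<omega>. ennreal (exp (- t * S \<omega>)) \<partial>M)"
    by (simp add: nn_integral_distr)
  also have "\<dots> = ennreal (expectation (\<lambda>\<omega>. exp (- t * S \<omega>)))"
  proof (rule nn_integral_eq_integral)
    show "integrable M (\<lambda>\<omega>. exp (- t * S \<omega>))"
      using S by (intro integrable_exp_neg_mult) (auto simp: t_def elim: eventually_mono)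
  qed simp
  finally have "measure (distr M borel S \<Otimes>\<^sub>M distr M borel E) B = expectation (\<lambda>\<omega>. exp (- t * S \<omega>))"
    by (simp add: measure_def integral_nonneg)
  moreover have "prob {\<omega> \<in> space M. E \<omega> * S \<omega> powr a0 \<le> x} = measure (distr M borel S \<Otimes>\<^sub>M distr M borel E) B"
    unfolding distr_eq by (subst measure_distr[OF _ B]) (auto simp: B_def intro!: arg_cong[where f=prob])
  ultimately show ?thesis
    by (simp add: t_def)
qed

lemma Fdist_Xproc_eq_exp:
  fixes M :: "'a measure" and \<alpha> \<alpha>0 \<tau> x :: real and K ns j :: nat
    and \<theta> :: "nat \<Rightarrow> real" and w :: "nat \<Rightarrow> nat \<Rightarrow> real" and Z eps :: "nat \<Rightarrow> 'a \<Rightarrow> real"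
  assumes "prob_space M"
    and indep: "prob_space.indep_vars M (\<lambda>_. borel) (case_sum Z eps) ({1..K} <+> {1..ns})"
    and Zpos: "\<forall>k\<in>{1..K}. AE \<omega> in M. 0 < Z k \<omega>"
    and Zlap: "\<forall>k\<in>{1..K}. \<forall>s\<ge>0.
         integral\<^sup>L M (\<lambda>\<omega>. exp (- s * Z k \<omega>)) = exp (- ((\<theta> k + s) powr \<alpha> - \<theta> k powr \<alpha>))"
    and eps: "\<forall>y>0. measure M {\<omega> \<in> space M. eps j \<omega> \<le> y} = exp (- ((y / \<tau>) powr (- 1 / \<alpha>0)))"
    and j: "j \<in> {1..ns}" and C: "Cset K w j \<noteq> {}"
    and \<tau>: "0 < \<tau>" and \<alpha>0: "0 < \<alpha>0" and x: "0 < x"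
  shows "Fdist M (Xproc \<alpha> \<alpha>0 K w Z eps j) x
       = exp (- (\<Sum>k=1..K. (\<theta> k + x powr (- 1 / \<alpha>0) * (\<tau> powr (1 / \<alpha>0) * w k j powr (1 / \<alpha>))) powr \<alpha>
                           - \<theta> k powr \<alpha>))"
proof -
  interpret prob_space M by fact
  define S where "S \<omega> = (\<Sum>k=1..K. w k j powr (1 / \<alpha>) * Z k \<omega>)" for \<omega>
  define t where "t = x powr (- 1 / \<alpha>0)"
  define a where "a k = \<tau> powr (1 / \<alpha>0) * w k j powr (1 / \<alpha>)" for k
  have "indep_vars (\<lambda>_. borel) (\<lambda>k. case_sum Z eps (Inl k)) {1..K}"
    by (rule indep_vars_reindex, simp, rule indep_vars_subset[OF indep]) auto
  then have indZ: "indep_vars (\<lambda>_. borel) Z {1..K}"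
    by simp
  have indSE: "indep_var borel S borel (eps j)"
    unfolding S_def by (rule indep_var_sum_Inl_Inr[OF indep _ j]) simp
  obtain k0 where k0: "k0 \<in> {1..K}" "w k0 j \<noteq> 0"
    using C by (auto simp: Cset_def)
  have "AE \<omega> in M. \<forall>k\<in>{1..K}. 0 < Z k \<omega>"
    using Zpos by (intro AE_finite_allI) auto
  then have Spos: "AE \<omega> in M. 0 < S \<omega>"
  proof eventually_elim
    case (elim \<omega>)
    have "0 < w k0 j powr (1 / \<alpha>) * Z k0 \<omega>"
      using elim k0 by simp
    also have "\<dots> \<le> S \<omega>"
      unfolding S_def using elim k0
      by (intro member_le_sum mult_nonneg_nonneg) (auto simp: less_imp_le)
    finally show ?case .
  qed
  have "(x / \<tau>) powr (- 1 / \<alpha>0) = t * \<tau> powr (1 / \<alpha>0)"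
    using x \<tau> by (simp add: t_def powr_divide powr_minus_divide)
  then have "Fdist M (Xproc \<alpha> \<alpha>0 K w Z eps j) x = expectation (\<lambda>\<omega>. exp (- (\<Sum>k=1..K. (t * a k) * Z k \<omega>)))"
    using prob_mult_powr_le_Frechet[OF indSE Spos eps[rule_format] \<tau> \<alpha>0 x]
    by (simp add: Fdist_def Xproc_def S_def a_def sum_distrib_left sum_negf mult_ac)
  also have "\<dots> = (\<Prod>k=1..K. expectation (\<lambda>\<omega>. exp (- (t * a k) * Z k \<omega>)))"
  proof (rule expectation_exp_neg_sum_indep[OF _ indZ])
    show "AE \<omega> in M. 0 \<le> Z k \<omega>" if "k \<in> {1..K}" for k
      using Zpos[rule_format, OF that] by eventually_elim simp
  qed (simp_all add: t_def a_def)
  also have "\<dots> = (\<Prod>k=1..K. exp (- ((\<theta> k + t * a k) powr \<alpha> - \<theta> k powr \<alpha>)))"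
    using Zlap by (intro prod.cong) (auto simp: t_def a_def)
  finally show ?thesis
    by (simp add: exp_sum[symmetric] sum_negf[symmetric] t_def a_def)
qed

lemma weight_eq_0_if_Dset:
  assumes "Cset K w j \<inter> Dset K \<theta> = {}" and "k \<in> Dset K \<theta>"
  shows "w k j = 0"
  using assms by (auto simp: Cset_def Dset_def)

lemma sum_eq_sum_Dbar:
  assumes "\<And>k. k \<in> Dset K \<theta> \<Longrightarrow> f k = 0"
  shows "(\<Sum>k=1..K. f k) = (\<Sum>k\<in>Dbar K \<theta>. f k)"
  by (rule sum.mono_neutral_right) (auto simp: Dbar_def Dset_def assms)

lemma cconst_pos:
  assumes "0 < \<alpha>" "0 < \<tau>" "Cset K w j \<noteq> {}" "Cset K w j \<inter> Dset K \<theta> = {}"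
  shows "cconst \<alpha> \<alpha>0 \<tau> K \<theta> w j > 0"
proof -
  obtain k0 where k0: "k0 \<in> Cset K w j"
    using assms(3) by blast
  then have "k0 \<in> Dbar K \<theta>" "\<theta> k0 \<noteq> 0" "w k0 j \<noteq> 0"
    using assms(4) by (auto simp: Cset_def Dset_def Dbar_def)
  then have "0 < (\<Sum>k\<in>Dbar K \<theta>. \<theta> k powr (\<alpha> - 1) * w k j powr (1 / \<alpha>))"
    by (intro sum_pos2[of _ k0]) (simp_all add: Dbar_def)
  with assms(1,2) show ?thesis
    by (simp add: cconst_def)
qed

theorem corollary2p2:
  fixes M :: "'a measure"
    and \<alpha> \<alpha>0 \<tau> :: real and K ns j :: nat
    and \<theta> :: "nat \<Rightarrow> real" and w :: "nat \<Rightarrow> nat \<Rightarrow> real"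
    and Z eps :: "nat \<Rightarrow> 'a \<Rightarrow> real"
  assumes "prob_space M"
    and "0 < \<alpha>" "\<alpha> < 1" "0 < \<alpha>0" "0 < \<tau>" "1 \<le> K"
    and "\<forall>k\<in>{1..K}. 0 \<le> \<theta> k"
    and "\<forall>k\<in>{1..K}. \<forall>i\<in>{1..ns}. 0 \<le> w k i"
    and "\<forall>i\<in>{1..ns}. Cset K w i \<noteq> {}"
    and indep: "prob_space.indep_vars M (\<lambda>_. borel) (case_sum Z eps) ({1..K} <+> {1..ns})"
    and Zpos: "\<forall>k\<in>{1..K}. AE \<omega> in M. 0 < Z k \<omega>"
    and Zlap: "\<forall>k\<in>{1..K}. \<forall>s\<ge>0.
         integral\<^sup>L M (\<lambda>\<omega>. exp (- s * Z k \<omega>)) = exp (- ((\<theta> k + s) powr \<alpha> - \<theta> k powr \<alpha>))"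
    and epsdist: "\<forall>i\<in>{1..ns}. \<forall>x>0.
         measure M {\<omega> \<in> space M. eps i \<omega> \<le> x} = exp (- ((x / \<tau>) powr (- 1 / \<alpha>0)))"
    and "j \<in> {1..ns}"
    and "Cset K w j \<inter> Dset K \<theta> = {}"
  shows "cconst' \<alpha> \<alpha>0 \<tau> K \<theta> w j = 0 \<and>
    (\<lambda>x. (1 - Fdist M (Xproc \<alpha> \<alpha>0 K w Z eps j) x)
          - (cconst \<alpha> \<alpha>0 \<tau> K \<theta> w j * x powr (- 1 / \<alpha>0)
             + (dconst \<alpha> \<alpha>0 \<tau> K \<theta> w j - (cconst \<alpha> \<alpha>0 \<tau> K \<theta> w j)\<^sup>2 / 2) * x powr (- 2 / \<alpha>0)))
    \<in> o[at_top](\<lambda>x. x powr (- 2 / \<alpha>0))"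
proof -
  note w_Dset = weight_eq_0_if_Dset[OF assms(15)]
  have c'0: "cconst' \<alpha> \<alpha>0 \<tau> K \<theta> w j = 0"
    by (simp add: cconst'_def w_Dset)
  \<comment> \<open>the factor \<open>\<tau> powr (1/\<alpha>0)\<close> absorbs \<open>\<tau>\<close> from \<open>(x/\<tau>) powr (-1/\<alpha>0)\<close>, so that the
    Taylor coefficients of \<open>P\<close> below are exactly \<open>cconst\<close> and \<open>dconst\<close>\<close>
  define a where "a k = \<tau> powr (1 / \<alpha>0) * w k j powr (1 / \<alpha>)" for k
  define P where "P t = (\<Sum>k\<in>Dbar K \<theta>. (\<theta> k + t * a k) powr \<alpha> - \<theta> k powr \<alpha>)" for t
  have c: "cconst \<alpha> \<alpha>0 \<tau> K \<theta> w j = \<alpha> * (\<Sum>k\<in>Dbar K \<theta>. \<theta> k powr (\<alpha> - 1) * a k)"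
    by (simp add: cconst_def a_def sum_distrib_left mult_ac)
  have d: "dconst \<alpha> \<alpha>0 \<tau> K \<theta> w j
      = \<alpha> * (\<alpha> - 1) / 2 * (\<Sum>k\<in>Dbar K \<theta>. \<theta> k powr (\<alpha> - 2) * (a k)^2)"
    by (simp add: dconst_def a_def sum_distrib_left power_mult_distrib power2_powr mult_ac)
  have "finite (Dbar K \<theta>)" "\<And>k. k \<in> Dbar K \<theta> \<Longrightarrow> \<theta> k > 0"
    using assms(7) by (auto simp: Dbar_def Dset_def order_le_less)
  from sum_powr_second_order_expansion[OF this, where a=a and al=\<alpha>]
  have "((\<lambda>t. (P t - cconst \<alpha> \<alpha>0 \<tau> K \<theta> w j * t - dconst \<alpha> \<alpha>0 \<tau> K \<theta> w j * t^2) / t^2)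
      \<longlongrightarrow> 0) (at_right 0)"
    unfolding P_def c d by (rule tendsto_within_subset[OF _ subset_UNIV])
  moreover have "cconst \<alpha> \<alpha>0 \<tau> K \<theta> w j \<noteq> 0"
    using cconst_pos assms(2,5,9,14,15) by (metis less_irrefl)
  ultimately have expansion: "((\<lambda>t. (1 - exp (- P t) - cconst \<alpha> \<alpha>0 \<tau> K \<theta> w j * t
      - (dconst \<alpha> \<alpha>0 \<tau> K \<theta> w j - (cconst \<alpha> \<alpha>0 \<tau> K \<theta> w j)\<^sup>2 / 2) * t^2) / t^2) \<longlongrightarrow> 0)
      (at_right 0)"
    by (rule one_minus_exp_neg_second_order_expansion)
  have F: "1 - Fdist M (Xproc \<alpha> \<alpha>0 K w Z eps j) x = 1 - exp (- P (x powr (- 1 / \<alpha>0)))"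
    if "x > 0" for x
  proof -
    have "Fdist M (Xproc \<alpha> \<alpha>0 K w Z eps j) x
        = exp (- (\<Sum>k=1..K. (\<theta> k + x powr (- 1 / \<alpha>0) * a k) powr \<alpha> - \<theta> k powr \<alpha>))"
      unfolding a_def using epsdist assms(9,14)
      by (intro Fdist_Xproc_eq_exp[OF assms(1) indep Zpos Zlap _ assms(14) _ assms(5,4) that]) auto
    also have "(\<Sum>k=1..K. (\<theta> k + x powr (- 1 / \<alpha>0) * a k) powr \<alpha> - \<theta> k powr \<alpha>)
        = P (x powr (- 1 / \<alpha>0))"
      unfolding P_def by (rule sum_eq_sum_Dbar) (simp add: Dset_def a_def w_Dset)
    finally show ?thesis
      by simp
  qed
  show ?thesis
    using c'0 second_order_expansion_at_top_of_at_right[OF assms(4) expansion F] by blast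
qed

end
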